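(* Let $\mathbf{A}$ be a countable UL-chain and let $\mathscr{K}_1$ be the class of all finite $\mathbf{A}$-structures $\langle\mathbf{A},\mathbf{M}\rangle$ in the language with a single binary relation symbol $<$ such that for all $a,b\in M$: (1.1) $\|a<a\|^{\mathbf{A}}_{\mathbf{M}}<\bar 1$, and (1.2) $\|a<b\to b<a\|^{\mathbf{A}}_{\mathbf{M}}\ge\bar 1$. Then $\mathscr{K}_1^{\cong}$ is a Fraïssé class, i.e. a countable set of finitely generated $\mathbf{A}$-structures having the hereditary property, the joint embedding property and the amalgamation property.
   Context: A UL-algebra is $\mathbf{A}=\langle A,\wedge,\vee,\&,\to,\bar 0,\bar 1,\bot,\top\rangle$ where $\langle A,\wedge,\vee,\bot,\top\rangle$ is a bounded lattice, $\langle A,\&,\bar 1\rangle$ is a commutative monoid, $a\& b\le c$ iff $b\le a\to c$, and $((a\to b)\wedge\bar 1)\vee((b\to a)\wedge \bar 1)=\bar 1$; a UL-chain is one with linear order. An $\mathbf{A}$-structure for $\{<\}$ is a set $M$ with a function $<_{\mathbf{M}}:M^2\to A$, $\|a<b\|^{\mathbf{A}}_{\mathbf{M}}=<_{\mathbf{M}}(a,b)$, compound formulas evaluated by the operations of $\mathbf{A}$. Substructure: subset with restricted relation. Embedding: injective map preserving the values of $<$, identity on $\mathbf{A}$; isomorphism: surjective embedding. $\mathscr{K}^{\cong}$: one representative of each isomorphism type in $\mathscr{K}$. Hereditary property: closed under substructures (up to isomorphism). Joint embedding property: any two members embed into a common member. Amalgamation property: whenever $\mathbf{M}_0$ is a substructure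 of both $\mathbf{M}_1$ and $\mathbf{M}_2$, all in the class, there are a member $\mathbf{M}_3$ and embeddings $f_1:\mathbf{M}_1\to\mathbf{M}_3$, $f_2:\mathbf{M}_2\to\mathbf{M}_3$ agreeing on $M_0$. *)

theory Defs
  imports Main "HOL-Library.Countable_Set"
begin

record 'a ul_alg =
  ucarrier :: "'a set"
  umeet :: "'a \<Rightarrow> 'a \<Rightarrow> 'a"
  ujoin :: "'a \<Rightarrow> 'a \<Rightarrow> 'a"
  umult :: "'a \<Rightarrow> 'a \<Rightarrow> 'a"
  uimp  :: "'a \<Rightarrow> 'a \<Rightarrow> 'a"
  uzero :: 'a
  uone  :: 'a
  ubot  :: 'a
  utop  :: 'a

definition ul_le :: "'a ul_alg \<Rightarrow> 'a \<Rightarrow> 'a \<Rightarrow> bool" where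
  "ul_le A x y \<longleftrightarrow> umeet A x y = x"

definition ul_lt :: "'a ul_alg \<Rightarrow> 'a \<Rightarrow> 'a \<Rightarrow> bool" where
  "ul_lt A x y \<longleftrightarrow> ul_le A x y \<and> x \<noteq> y"

definition UL_algebra :: "'a ul_alg \<Rightarrow> bool" where
  "UL_algebra A \<longleftrightarrow>
     (let C = ucarrier A in
      uzero A \<in> C \<and> uone A \<in> C \<and> ubot A \<in> C \<and> utop A \<in> C \<and>
      (\<forall>x\<in>C. \<forall>y\<in>C. umeet A x y \<in> C \<and> ujoin A x y \<in> C \<and>
                      umult A x y \<in> C \<and> uimp A x y \<in> C) \<and>
      \<comment> \<open>bounded lattice\<close>
      (\<forall>x\<in>C. \<forall>y\<in>C. \<forall>z\<in>C.
          umeet A x (umeet A y z) = umeet A (umeet A x y) z \<and>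
          ujoin A x (ujoin A y z) = ujoin A (ujoin A x y) z) \<and>
      (\<forall>x\<in>C. \<forall>y\<in>C. umeet A x y = umeet A y x \<and> ujoin A x y = ujoin A y x \<and>
          umeet A x (ujoin A x y) = x \<and> ujoin A x (umeet A x y) = x) \<and>
      (\<forall>x\<in>C. ul_le A (ubot A) x \<and> ul_le A x (utop A)) \<and>
      \<comment> \<open>commutative monoid\<close>
      (\<forall>x\<in>C. \<forall>y\<in>C. \<forall>z\<in>C. umult A x (umult A y z) = umult A (umult A x y) z) \<and>
      (\<forall>x\<in>C. \<forall>y\<in>C. umult A x y = umult A y x) \<and>
      (\<forall>x\<in>C. umult A (uone A) x = x) \<and>
      \<comment> \<open>residuation\<close>
      (\<forall>a\<in>C. \<forall>b\<in>C. \<forall>c\<in>C. ul_le A (umult A a b) c \<longleftrightarrow> ul_le A b (uimp A a c)) \<and>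
      \<comment> \<open>prelinearity\<close>
      (\<forall>a\<in>C. \<forall>b\<in>C. ujoin A (umeet A (uimp A a b) (uone A)) (umeet A (uimp A b a) (uone A))
                       = uone A))"

definition UL_chain :: "'a ul_alg \<Rightarrow> bool" where
  "UL_chain A \<longleftrightarrow> UL_algebra A \<and>
     (\<forall>x\<in>ucarrier A. \<forall>y\<in>ucarrier A. ul_le A x y \<or> ul_le A y x)"

text \<open>An A-structure for the language with one binary relation symbol: a nonempty
  domain M together with the value function of the relation (only values on M matter).\<close>
type_synonym ('b, 'a) astr = "'b set \<times> ('b \<Rightarrow> 'b \<Rightarrow> 'a)"

definition A_structure :: "'a ul_alg \<Rightarrow> ('b, 'a) astr \<Rightarrow> bool" where
  "A_structure A S \<longleftrightarrow> fst S \<noteq> {} \<and>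
     (\<forall>a\<in>fst S. \<forall>b\<in>fst S. snd S a b \<in> ucarrier A)"

definition substructure :: "('b, 'a) astr \<Rightarrow> ('b, 'a) astr \<Rightarrow> bool" where
  "substructure N M \<longleftrightarrow> fst N \<subseteq> fst M \<and>
     (\<forall>a\<in>fst N. \<forall>b\<in>fst N. snd N a b = snd M a b)"

definition embedding :: "('b \<Rightarrow> 'c) \<Rightarrow> ('b, 'a) astr \<Rightarrow> ('c, 'a) astr \<Rightarrow> bool" where
  "embedding f M N \<longleftrightarrow> f ` fst M \<subseteq> fst N \<and> inj_on f (fst M) \<and>
     (\<forall>a\<in>fst M. \<forall>b\<in>fst M. snd N (f a) (f b) = snd M a b)"

definition isomorphic :: "('b, 'a) astr \<Rightarrow> ('c, 'a) astr \<Rightarrow> bool" where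
  "isomorphic M N \<longleftrightarrow> (\<exists>f. embedding f M N \<and> f ` fst M = fst N)"

text \<open>The class K_1 of finite A-structures satisfying (1.1) and (1.2); universes are
  taken to be subsets of nat (every finite structure is isomorphic to such a one).\<close>
definition K1 :: "'a ul_alg \<Rightarrow> (nat, 'a) astr set" where
  "K1 A = {S. A_structure A S \<and> finite (fst S) \<and>
     (\<forall>a\<in>fst S. \<forall>b\<in>fst S.
        ul_lt A (snd S a a) (uone A) \<and>
        ul_le A (uone A) (uimp A (snd S a b) (snd S b a)))}"

definition hereditary :: "(nat, 'a) astr set \<Rightarrow> bool" where
  "hereditary K \<longleftrightarrow> (\<forall>M\<in>K. \<forall>N. substructure N M \<and> fst N \<noteq> {} \<longrightarrow>
      (\<exists>N'\<in>K. isomorphic N N'))"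

definition joint_embedding :: "(nat, 'a) astr set \<Rightarrow> bool" where
  "joint_embedding K \<longleftrightarrow> (\<forall>M1\<in>K. \<forall>M2\<in>K. \<exists>M3\<in>K. \<exists>f g.
      embedding f M1 M3 \<and> embedding g M2 M3)"

definition amalgamation :: "(nat, 'a) astr set \<Rightarrow> bool" where
  "amalgamation K \<longleftrightarrow> (\<forall>M0\<in>K. \<forall>M1\<in>K. \<forall>M2\<in>K.
      substructure M0 M1 \<and> substructure M0 M2 \<longrightarrow>
      (\<exists>M3\<in>K. \<exists>f1 f2. embedding f1 M1 M3 \<and> embedding f2 M2 M3 \<and>
          (\<forall>x\<in>fst M0. f1 x = f2 x)))"

text \<open>K is (up to isomorphism) a Fraisse class: countably many isomorphism types,
  all finitely generated (= finite, the language being relational), with HP, JEP, AP.\<close>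
definition fraisse_class :: "(nat, 'a) astr set \<Rightarrow> bool" where
  "fraisse_class K \<longleftrightarrow>
     (\<exists>R. countable R \<and> R \<subseteq> K \<and> (\<forall>M\<in>K. \<exists>N\<in>R. isomorphic M N)) \<and>
     (\<forall>M\<in>K. finite (fst M)) \<and>
     hereditary K \<and> joint_embedding K \<and> amalgamation K"

end

theory Submission
  imports Defs
begin

text \<open>Everything rests on free amalgamation. Glue two structures along a
  common substructure and give every new pair (one point from each side, outside the
  common part) the value \<open>\<bottom>\<close>. Condition (1.1) concerns single points and is inherited,
  and (1.2) holds for the new pairs because \<open>\<one> \<le> \<bottom> \<rightarrow> \<bottom>\<close>. Gluing along the empty
  structure gives joint embeddings. The class is hereditary since (1.1) and (1.2) are
  universal conditions. Finally, a finite structure over a countable algebra is a finite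
  subset of \<open>\<nat>\<close> together with finitely many values from the algebra, so there are only
  countably many isomorphism types.\<close>

lemma ul_bot_closed:
  assumes "UL_algebra A"
  shows "ubot A \<in> ucarrier A"
  using assms unfolding UL_algebra_def Let_def by blast

lemma ul_le_refl:
  assumes "UL_algebra A" "x \<in> ucarrier A"
  shows "ul_le A x x"
proof -
  have "umeet A x x \<in> ucarrier A" using assms unfolding UL_algebra_def Let_def by blast
  then have "umeet A x (ujoin A x (umeet A x x)) = x" "ujoin A x (umeet A x x) = x"
    using assms unfolding UL_algebra_def Let_def by blast+
  then show ?thesis unfolding ul_le_def by simp
qed

lemma ul_one_le_imp_refl:
  assumes "UL_algebra A" "x \<in> ucarrier A"
  shows "ul_le A (uone A) (uimp A x x)"
proof -
  have one: "uone A \<in> ucarrier A" using assms unfolding UL_algebra_def Let_def by blast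
  then have "umult A x (uone A) = x"
    using assms unfolding UL_algebra_def Let_def by metis
  moreover have "ul_le A (umult A x (uone A)) x \<longleftrightarrow> ul_le A (uone A) (uimp A x x)"
    using assms one unfolding UL_algebra_def Let_def by blast
  ultimately show ?thesis using ul_le_refl[OF assms] by simp
qed

lemma isomorphic_refl: "isomorphic M M"
  unfolding isomorphic_def embedding_def by (rule exI[of _ id]) auto

lemma K1_substructure_closed:
  assumes "M \<in> K1 A" "substructure N M" "fst N \<noteq> {}"
  shows "N \<in> K1 A"
  using assms unfolding K1_def A_structure_def substructure_def
  by (auto intro: finite_subset) (metis subsetD)+

lemma hereditary_K1: "hereditary (K1 A)"
  unfolding hereditary_def using K1_substructure_closed isomorphic_refl by blast

definition amalgam_left :: "nat \<Rightarrow> nat" where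
  "amalgam_left x = 2 * x"

definition amalgam_right :: "nat set \<Rightarrow> nat \<Rightarrow> nat" where
  "amalgam_right Z x = (if x \<in> Z then 2 * x else Suc (2 * x))"

text \<open>The copies of \<open>M\<^sub>1\<close> and \<open>M\<^sub>2\<close> are placed on even numbers and odd numbers, except
  that the points of \<open>Z\<close> (the common substructure) are identified.\<close>
definition free_amalgam ::
    "'a ul_alg \<Rightarrow> nat set \<Rightarrow> (nat, 'a) astr \<Rightarrow> (nat, 'a) astr \<Rightarrow> (nat, 'a) astr" where
  "free_amalgam A Z M1 M2 =
     (let D1 = amalgam_left ` fst M1; D2 = amalgam_right Z ` fst M2 in
      (D1 \<union> D2, \<lambda>u v. if u \<in> D1 \<and> v \<in> D1 then snd M1 (u div 2) (v div 2)
                     else if u \<in> D2 \<and> v \<in> D2 then snd M2 (u div 2) (v div 2)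
                     else ubot A))"

lemma amalgam_left_div2 [simp]: "amalgam_left x div 2 = x"
  unfolding amalgam_left_def by simp

lemma amalgam_right_div2 [simp]: "amalgam_right Z x div 2 = x"
  unfolding amalgam_right_def by simp

lemma amalgam_right_in_left_image:
  assumes "amalgam_right Z x \<in> amalgam_left ` S"
  shows "x \<in> Z \<and> x \<in> S"
  using assms unfolding amalgam_left_def amalgam_right_def
  by (auto split: if_splits) presburger+

lemma free_amalgam_in_K1:
  assumes A: "UL_algebra A" and M1: "M1 \<in> K1 A" and M2: "M2 \<in> K1 A"
  shows "free_amalgam A Z M1 M2 \<in> K1 A"
proof -
  define D1 where "D1 = amalgam_left ` fst M1"
  define D2 where "D2 = amalgam_right Z ` fst M2"
  define D where "D = fst (free_amalgam A Z M1 M2)"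
  define r where "r = snd (free_amalgam A Z M1 M2)"
  have D: "D = D1 \<union> D2"
    unfolding D_def D1_def D2_def free_amalgam_def Let_def by simp
  have r: "r u v = (if u \<in> D1 \<and> v \<in> D1 then snd M1 (u div 2) (v div 2)
      else if u \<in> D2 \<and> v \<in> D2 then snd M2 (u div 2) (v div 2) else ubot A)" for u v
    unfolding r_def D1_def D2_def free_amalgam_def Let_def by simp
  have D1_div2: "u div 2 \<in> fst M1" if "u \<in> D1" for u
    using that unfolding D1_def by auto
  have D2_div2: "u div 2 \<in> fst M2" if "u \<in> D2" for u
    using that unfolding D2_def by auto
  have values_cases: "(\<exists>M\<in>{M1, M2}. u div 2 \<in> fst M \<and> v div 2 \<in> fst M \<and>
        r u v = snd M (u div 2) (v div 2) \<and> r v u = snd M (v div 2) (u div 2)) \<or>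
      (u \<noteq> v \<and> r u v = ubot A \<and> r v u = ubot A)"
    if "u \<in> D" "v \<in> D" for u v
  proof (cases "u \<in> D1 \<and> v \<in> D1")
    case True
    then show ?thesis using D1_div2 r[of u v] r[of v u] by auto
  next
    case False
    then show ?thesis using that D D2_div2 r[of u v] r[of v u] by auto
  qed
  have K1_values: "snd M a b \<in> ucarrier A \<and> ul_lt A (snd M a a) (uone A) \<and>
      ul_le A (uone A) (uimp A (snd M a b) (snd M b a))"
    if "M \<in> {M1, M2}" "a \<in> fst M" "b \<in> fst M" for M a b
    using that M1 M2 unfolding K1_def A_structure_def by auto
  have "r u v \<in> ucarrier A" "ul_lt A (r u u) (uone A)"
      "ul_le A (uone A) (uimp A (r u v) (r v u))"
    if "u \<in> D" "v \<in> D" for u v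
    using values_cases[OF that] values_cases[OF that(1) that(1)] K1_values
      ul_bot_closed[OF A] ul_one_le_imp_refl[OF A ul_bot_closed[OF A]]
    by fastforce+
  moreover have "D \<noteq> {}" "finite D"
    using M1 M2 unfolding D_def free_amalgam_def K1_def A_structure_def Let_def by auto
  ultimately show ?thesis
    unfolding K1_def A_structure_def by (simp add: D_def[symmetric] r_def[symmetric])
qed

lemma inj_amalgam_left: "inj amalgam_left"
  by (metis amalgam_left_div2 injI)

lemma inj_amalgam_right: "inj (amalgam_right Z)"
  by (metis amalgam_right_div2 injI)

lemma embedding_amalgam_left: "embedding amalgam_left M1 (free_amalgam A Z M1 M2)"
  unfolding embedding_def free_amalgam_def Let_def
  using inj_amalgam_left by (auto simp: inj_on_def)

lemma embedding_amalgam_right: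
  assumes "substructure M0 M1" "substructure M0 M2"
  shows "embedding (amalgam_right (fst M0)) M2 (free_amalgam A (fst M0) M1 M2)"
  unfolding embedding_def
proof (intro conjI ballI)
  show "amalgam_right (fst M0) ` fst M2 \<subseteq> fst (free_amalgam A (fst M0) M1 M2)"
    unfolding free_amalgam_def Let_def by auto
  show "inj_on (amalgam_right (fst M0)) (fst M2)"
    using inj_amalgam_right by (rule inj_on_subset) simp
next
  fix a b assume "a \<in> fst M2" "b \<in> fst M2"
  moreover have "snd M1 a b = snd M2 a b"
    if "amalgam_right (fst M0) a \<in> amalgam_left ` fst M1"
       "amalgam_right (fst M0) b \<in> amalgam_left ` fst M1"
    using amalgam_right_in_left_image[OF that(1)] amalgam_right_in_left_image[OF that(2)] assms
    unfolding substructure_def by simp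
  ultimately show "snd (free_amalgam A (fst M0) M1 M2) (amalgam_right (fst M0) a)
      (amalgam_right (fst M0) b) = snd M2 a b"
    unfolding free_amalgam_def Let_def by auto
qed

lemma K1_free_amalgamation:
  assumes "UL_algebra A" "M1 \<in> K1 A" "M2 \<in> K1 A" "substructure M0 M1" "substructure M0 M2"
  shows "\<exists>M3\<in>K1 A. \<exists>f1 f2. embedding f1 M1 M3 \<and> embedding f2 M2 M3 \<and>
           (\<forall>x\<in>fst M0. f1 x = f2 x)"
proof -
  have "\<forall>x\<in>fst M0. amalgam_left x = amalgam_right (fst M0) x"
    unfolding amalgam_left_def amalgam_right_def by simp
  then show ?thesis
    using free_amalgam_in_K1[OF assms(1-3)] embedding_amalgam_left
      embedding_amalgam_right[OF assms(4,5)] by blast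
qed

lemma amalgamation_K1:
  assumes "UL_algebra A"
  shows "amalgamation (K1 A)"
  unfolding amalgamation_def using K1_free_amalgamation[OF assms] by blast

lemma joint_embedding_K1:
  assumes "UL_algebra A"
  shows "joint_embedding (K1 A)"
  unfolding joint_embedding_def
proof (intro ballI)
  fix M1 M2 assume "M1 \<in> K1 A" "M2 \<in> K1 A"
  moreover have "substructure ({}, r) M" for r and M :: "(nat, 'a) astr"
    unfolding substructure_def by simp
  ultimately show "\<exists>M3\<in>K1 A. \<exists>f g. embedding f M1 M3 \<and> embedding g M2 M3"
    using K1_free_amalgamation[OF assms] by meson
qed

text \<open>Values of the relation outside the universe are irrelevant; fixing them to \<open>\<bottom>\<close> gives
  an isomorphic copy that is determined by finitely many data.\<close>
definition restrict_structure :: "'a ul_alg \<Rightarrow> ('b, 'a) astr \<Rightarrow> ('b, 'a) astr" where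
  "restrict_structure A M =
     (fst M, \<lambda>x y. if x \<in> fst M \<and> y \<in> fst M then snd M x y else ubot A)"

lemma isomorphic_restrict_structure: "isomorphic M (restrict_structure A M)"
  unfolding isomorphic_def embedding_def restrict_structure_def by (rule exI[of _ id]) auto

lemma restrict_structure_K1: "M \<in> K1 A \<Longrightarrow> restrict_structure A M \<in> K1 A"
  unfolding K1_def A_structure_def restrict_structure_def by auto

lemma countable_restrict_finite_structures:
  assumes "countable (ucarrier A)"
  shows "countable (restrict_structure A ` {M :: (nat, 'a) astr. A_structure A M \<and> finite (fst M)})"
proof -
  define decode :: "nat set \<times> ((nat \<times> nat) \<times> 'a) list \<Rightarrow> (nat, 'a) astr" where
    "decode = (\<lambda>(S, xs). (S, \<lambda>x y. if x \<in> S \<and> y \<in> S then the (map_of xs (x, y)) else ubot A))"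
  have "restrict_structure A ` {M. A_structure A M \<and> finite (fst M)}
      \<subseteq> decode ` ({S. finite S} \<times> lists (UNIV \<times> ucarrier A))"
  proof (intro image_subsetI, elim CollectE conjE)
    fix M :: "(nat, 'a) astr" assume M: "A_structure A M" "finite (fst M)"
    obtain ps where ps: "set ps = fst M \<times> fst M"
      using finite_list[of "fst M \<times> fst M"] M(2) by auto
    define xs where "xs = map (\<lambda>p. (p, case_prod (snd M) p)) ps"
    have "map_of xs (x, y) = Some (snd M x y)" if "x \<in> fst M" "y \<in> fst M" for x y
      using that ps unfolding xs_def map_of_map_restrict by simp
    then have "restrict_structure A M = decode (fst M, xs)"
      unfolding restrict_structure_def decode_def by (simp add: fun_eq_iff)
    moreover have "xs \<in> lists (UNIV \<times> ucarrier A)"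
      using M(1) ps unfolding xs_def A_structure_def by auto
    ultimately show "restrict_structure A M \<in> decode ` ({S. finite S} \<times> lists (UNIV \<times> ucarrier A))"
      using M(2) by blast
  qed
  moreover have "countable (decode ` ({S. finite S} \<times> lists (UNIV \<times> ucarrier A)))"
    using assms by (intro countable_image countable_SIGMA countable_lists countable_Collect_finite) auto
  ultimately show ?thesis
    by (rule countable_subset)
qed

lemma countable_isomorphism_types_K1:
  assumes "countable (ucarrier A)"
  shows "\<exists>R. countable R \<and> R \<subseteq> K1 A \<and> (\<forall>M\<in>K1 A. \<exists>N\<in>R. isomorphic M N)"
proof (intro exI conjI)
  show "countable (restrict_structure A ` K1 A)"
    using countable_restrict_finite_structures[OF assms]
    by (rule countable_subset[rotated]) (auto simp: K1_def)
qed (use restrict_structure_K1 isomorphic_restrict_structure in blast)+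

theorem proposition2:
  fixes A :: "'a ul_alg"
  assumes "UL_chain A" and "countable (ucarrier A)"
  shows "fraisse_class (K1 A)"
proof -
  have "UL_algebra A" using assms(1) unfolding UL_chain_def by simp
  moreover have "\<forall>M\<in>K1 A. finite (fst M)" unfolding K1_def by simp
  ultimately show ?thesis
    unfolding fraisse_class_def
    using countable_isomorphism_types_K1[OF assms(2)] hereditary_K1
      joint_embedding_K1 amalgamation_K1 by blast
qed

end
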